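(* Consider the two equations \[ \text{(A)}\quad \partial_{tt}u-\partial_{xx}u=(\partial_t u)^2, \qquad \text{(B)}\quad \partial_{tt}u-\partial_{xx}u=(\partial_t u)^2-(\partial_x u)^2 , \] for $u=u(t,x)$ real-valued, $x\in\mathbb{R}$. For $T>0$, $x_0\in\mathbb{R}$ let $\Gamma(T,x_0):=\{(t,x)\in[0,T)\times\mathbb{R}: |x-x_0|\le T-t\}$. \begin{enumerate} \item For any $T>0$ and $x_0\in\mathbb{R}$, neither (A) nor (B) admits a smooth exact self-similar blow-up solution in $\Gamma(T,x_0)$, i.e. there is no non-constant $U\in C^\infty([-1,1])$ such that $u(t,x)=U\big(\frac{x-x_0}{T-t}\big)$ solves (A), respectively (B), in $\Gamma(T,x_0)$. \item For all $T>0$ and $\kappa,x_0\in\mathbb{R}$, the functions \[ u_{\alpha,\beta,\kappa,T,x_0}(t,x)=-\alpha\log\Big(1-\frac{t}{T}\Big)+U_{\alpha,\beta}\Big(\frac{x-x_0}{T-t}\Big)+\kappa \] are smooth solutions, well defined in $\Gamma(T,x_0)$, which blow up at time $T$, where: for (A), $(\alpha,\beta)\in(0,1]\times\{0,\infty\}$ and \[ U_{\alpha,0}(y)=-\alpha\ln(1-\sqrt{1-\alpha}\,y),\qquad U_{\alpha,\infty}(y)=-\alpha\ln(1+\sqrt{1-\alpha}\,y); \] for (B), $(\alpha,\beta)\in\mathbb{Z}_+\times\mathbb{R}_+$ (with $\mathbb{R}_+=(0,\infty)$) and \[ U_{\alpha,\beta}(y)=-\log\big((1+y)^\alpha+\beta(1-y)^\alpha\big)+\log(1+\beta).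 \] This gives a five-parameter family $(\alpha,\beta,\kappa,T,x_0)$ of smooth generalized self-similar blow-up solutions with logarithmic growth. \end{enumerate}
   Context: A (exact) self-similar solution is one of the form $u(t,x)=U(y)$ with $y=\frac{x-x_0}{T-t}$; the backward light cone $|x-x_0|\le T-t$ corresponds to $|y|\le 1$. *)

theory Defs
  imports "HOL-Analysis.Analysis"
begin

definition pt :: "(real \<Rightarrow> real \<Rightarrow> real) \<Rightarrow> real \<Rightarrow> real \<Rightarrow> real" where
  "pt u t x = deriv (\<lambda>s. u s x) t"

definition px :: "(real \<Rightarrow> real \<Rightarrow> real) \<Rightarrow> real \<Rightarrow> real \<Rightarrow> real" where
  "px u t x = deriv (\<lambda>y. u t y) x"

fun Ck_on :: "nat \<Rightarrow> (real \<times> real) set \<Rightarrow> (real \<Rightarrow> real \<Rightarrow> real) \<Rightarrow> bool" where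
  "Ck_on 0 S u = continuous_on S (\<lambda>(t, x). u t x)"
| "Ck_on (Suc k) S u =
     ((\<forall>z\<in>S. (\<lambda>(t, x). u t x) differentiable (at z)) \<and> Ck_on k S (pt u) \<and> Ck_on k S (px u))"

definition smooth2_on :: "(real \<times> real) set \<Rightarrow> (real \<Rightarrow> real \<Rightarrow> real) \<Rightarrow> bool" where
  "smooth2_on S u \<longleftrightarrow> (\<forall>k. Ck_on k S u)"

definition smooth_on_interval :: "real \<Rightarrow> real \<Rightarrow> (real \<Rightarrow> real) \<Rightarrow> bool" where
  "smooth_on_interval a b U \<longleftrightarrow>
     (\<exists>D :: nat \<Rightarrow> real \<Rightarrow> real. (\<forall>y\<in>{a..b}. D 0 y = U y) \<and>
        (\<forall>k. \<forall>y\<in>{a..b}. (D k has_real_derivative D (Suc k) y) (at y within {a..b})))"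

definition solves_A :: "(real \<times> real) set \<Rightarrow> (real \<Rightarrow> real \<Rightarrow> real) \<Rightarrow> bool" where
  "solves_A S u \<longleftrightarrow> Ck_on 2 S u \<and>
     (\<forall>(t, x)\<in>S. pt (pt u) t x - px (px u) t x = (pt u t x)^2)"

definition solves_B :: "(real \<times> real) set \<Rightarrow> (real \<Rightarrow> real \<Rightarrow> real) \<Rightarrow> bool" where
  "solves_B S u \<longleftrightarrow> Ck_on 2 S u \<and>
     (\<forall>(t, x)\<in>S. pt (pt u) t x - px (px u) t x = (pt u t x)^2 - (px u t x)^2)"

definition Gamma :: "real \<Rightarrow> real \<Rightarrow> (real \<times> real) set" where
  "Gamma T x0 = {(t, x). 0 \<le> t \<and> t < T \<and> \<bar>x - x0\<bar> \<le> T - t}"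

definition U_A0 :: "real \<Rightarrow> real \<Rightarrow> real" where
  "U_A0 \<alpha> y = - \<alpha> * ln (1 - sqrt (1 - \<alpha>) * y)"

definition U_Ainf :: "real \<Rightarrow> real \<Rightarrow> real" where
  "U_Ainf \<alpha> y = - \<alpha> * ln (1 + sqrt (1 - \<alpha>) * y)"

definition U_B :: "nat \<Rightarrow> real \<Rightarrow> real \<Rightarrow> real" where
  "U_B \<alpha> \<beta> y = - ln ((1 + y) ^ \<alpha> + \<beta> * (1 - y) ^ \<alpha>) + ln (1 + \<beta>)"

definition gss :: "real \<Rightarrow> (real \<Rightarrow> real) \<Rightarrow> real \<Rightarrow> real \<Rightarrow> real \<Rightarrow> real \<Rightarrow> real \<Rightarrow> real" where
  "gss \<alpha> U \<kappa> T x0 t x = - \<alpha> * ln (1 - t / T) + U ((x - x0) / (T - t)) + \<kappa>"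

end

(*
  A self-similar u = U((x - x0)/(T - t)) turns both equations into a second-order ODE for
  the profile, (y^2 - 1) U'' + 2 y U' = y^2 U'^2 for (A) and = (y^2 - 1) U'^2 for (B).
  For V = (y^2 - 1) U' these are Riccati equations V' = - g V^2 whose coefficient g has a
  primitive G mapping (-1, 1) onto all of R.  Where V does not vanish, 1/V - G is constant;
  so if V(a) \<noteq> 0, at a point b with G(b) = G(a) - 1/V(a) the product V (G - G(b)) would
  have to jump from 1 to 0.  Hence U' = 0 and U is constant.

  The explicit solutions are verified by computation: for (A), u is - \<alpha> ln of a plane
  wave T - t - c (x - x0) up to a constant, with c^2 = 1 - \<alpha>; for (B), e^(-u) is a sum of
  the travelling waves (T - t \<plusminus> (x - x0))^\<alpha>, and (B) is the linear wave equation for e^(-u).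
  Smoothness holds because these functions are built from the coordinates by ring
  operations and ln.
*)

theory Submission
  imports Defs "HOL-Real_Asymp.Real_Asymp"
begin

section \<open>Smooth functions of (t, x)\<close>

definition has_gradient_on ::
    "(real \<times> real) set \<Rightarrow> (real \<Rightarrow> real \<Rightarrow> real) \<Rightarrow> (real \<Rightarrow> real \<Rightarrow> real) \<Rightarrow> (real \<Rightarrow> real \<Rightarrow> real) \<Rightarrow> bool"
  where "has_gradient_on N f f1 f2 \<longleftrightarrow> (\<forall>z\<in>N. ((\<lambda>p. f (fst p) (snd p)) has_derivative
    (\<lambda>h. f1 (fst z) (snd z) * fst h + f2 (fst z) (snd z) * snd h)) (at z))"

lemma has_gradient_on_const: "has_gradient_on N (\<lambda>t x. c) (\<lambda>t x. 0) (\<lambda>t x. 0)"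
  unfolding has_gradient_on_def by simp

lemma has_gradient_on_fst: "has_gradient_on N (\<lambda>t x. t) (\<lambda>t x. 1) (\<lambda>t x. 0)"
  unfolding has_gradient_on_def by (auto intro!: derivative_eq_intros)

lemma has_gradient_on_snd: "has_gradient_on N (\<lambda>t x. x) (\<lambda>t x. 0) (\<lambda>t x. 1)"
  unfolding has_gradient_on_def by (auto intro!: derivative_eq_intros)

lemma has_gradient_on_add:
  "has_gradient_on N f f1 f2 \<Longrightarrow> has_gradient_on N g g1 g2 \<Longrightarrow>
    has_gradient_on N (\<lambda>t x. f t x + g t x) (\<lambda>t x. f1 t x + g1 t x) (\<lambda>t x. f2 t x + g2 t x)"
  unfolding has_gradient_on_def by (auto intro!: derivative_eq_intros simp: algebra_simps)

lemma has_gradient_on_mult: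
  "has_gradient_on N f f1 f2 \<Longrightarrow> has_gradient_on N g g1 g2 \<Longrightarrow>
    has_gradient_on N (\<lambda>t x. f t x * g t x)
      (\<lambda>t x. f t x * g1 t x + f1 t x * g t x) (\<lambda>t x. f t x * g2 t x + f2 t x * g t x)"
  unfolding has_gradient_on_def by (auto intro!: derivative_eq_intros simp: algebra_simps)

lemma has_gradient_on_comp:
  assumes g: "has_gradient_on N g g1 g2"
    and h: "\<And>z. z \<in> N \<Longrightarrow> (h has_real_derivative h' (g (fst z) (snd z))) (at (g (fst z) (snd z)))"
  shows "has_gradient_on N (\<lambda>t x. h (g t x)) (\<lambda>t x. h' (g t x) * g1 t x) (\<lambda>t x. h' (g t x) * g2 t x)"
  unfolding has_gradient_on_def
proof
  fix z assume "z \<in> N"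
  from has_derivative_compose[OF g[unfolded has_gradient_on_def, rule_format, OF this]
      h[OF this, unfolded has_field_derivative_def]]
  show "((\<lambda>p. h (g (fst p) (snd p))) has_derivative
      (\<lambda>k. h' (g (fst z) (snd z)) * g1 (fst z) (snd z) * fst k +
           h' (g (fst z) (snd z)) * g2 (fst z) (snd z) * snd k)) (at z)"
    by (simp add: algebra_simps)
qed

lemma has_gradient_on_partials:
  assumes "has_gradient_on N f f1 f2" "(t, x) \<in> N"
  shows "pt f t x = f1 t x" "px f t x = f2 t x"
proof -
  have d: "((\<lambda>p. f (fst p) (snd p)) has_derivative (\<lambda>h. f1 t x * fst h + f2 t x * snd h)) (at (t, x))"
    using assms unfolding has_gradient_on_def by auto
  have "((\<lambda>s. (s, x)) has_derivative (\<lambda>h. (h, 0))) (at t)"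
    by (auto intro!: derivative_eq_intros)
  from has_derivative_compose[OF this d]
  have "((\<lambda>s. f s x) has_real_derivative f1 t x) (at t)"
    by (simp add: has_field_derivative_def mult_commute_abs)
  then show "pt f t x = f1 t x"
    unfolding pt_def by (rule DERIV_imp_deriv)
  have "((\<lambda>y. (t, y)) has_derivative (\<lambda>h. (0, h))) (at x)"
    by (auto intro!: derivative_eq_intros)
  from has_derivative_compose[OF this d]
  have "((\<lambda>y. f t y) has_real_derivative f2 t x) (at x)"
    by (simp add: has_field_derivative_def mult_commute_abs)
  then show "px f t x = f2 t x"
    unfolding px_def by (rule DERIV_imp_deriv)
qed

lemma has_gradient_on_differentiable:
  assumes "has_gradient_on N f f1 f2" "z \<in> N"
  shows "(\<lambda>(t, x). f t x) differentiable (at z)"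
  using assms unfolding has_gradient_on_def by (auto simp: differentiable_def case_prod_beta')

inductive smooth_term :: "(real \<times> real) set \<Rightarrow> (real \<Rightarrow> real \<Rightarrow> real) \<Rightarrow> bool" for N where
  smooth_term_const: "smooth_term N (\<lambda>t x. c)"
| smooth_term_fst: "smooth_term N (\<lambda>t x. t)"
| smooth_term_snd: "smooth_term N (\<lambda>t x. x)"
| smooth_term_add: "smooth_term N f \<Longrightarrow> smooth_term N g \<Longrightarrow> smooth_term N (\<lambda>t x. f t x + g t x)"
| smooth_term_mult: "smooth_term N f \<Longrightarrow> smooth_term N g \<Longrightarrow> smooth_term N (\<lambda>t x. f t x * g t x)"
| smooth_term_comp: "smooth_term N g \<Longrightarrow> (\<forall>z\<in>N. g (fst z) (snd z) \<in> S) \<Longrightarrow>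
     (\<forall>k. \<forall>y\<in>S. (D k has_real_derivative D (Suc k) y) (at y)) \<Longrightarrow>
     smooth_term N (\<lambda>t x. D 0 (g t x))"

lemma smooth_term_has_gradient_on:
  assumes "smooth_term N f"
  shows "\<exists>f1 f2. smooth_term N f1 \<and> smooth_term N f2 \<and> has_gradient_on N f f1 f2"
  using assms
proof induction
  case (smooth_term_const c)
  show ?case
    by (intro exI[of _ "\<lambda>t x. 0"] conjI smooth_term.smooth_term_const has_gradient_on_const)
next
  case smooth_term_fst
  show ?case
    by (intro exI[of _ "\<lambda>t x. 1"] exI[of _ "\<lambda>t x. 0"] conjI smooth_term.smooth_term_const
        has_gradient_on_fst)
next
  case smooth_term_snd
  show ?case
    by (intro exI[of _ "\<lambda>t x. 0"] exI[of _ "\<lambda>t x. 1"] conjI smooth_term.smooth_term_const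
        has_gradient_on_snd)
next
  case (smooth_term_add f g)
  then obtain f1 f2 g1 g2 where "smooth_term N f1" "smooth_term N f2" "has_gradient_on N f f1 f2"
    "smooth_term N g1" "smooth_term N g2" "has_gradient_on N g g1 g2"
    by blast
  then show ?case
    by (intro exI[of _ "\<lambda>t x. f1 t x + g1 t x"] exI[of _ "\<lambda>t x. f2 t x + g2 t x"] conjI
        smooth_term.smooth_term_add has_gradient_on_add)
next
  case (smooth_term_mult f g)
  then obtain f1 f2 g1 g2 where "smooth_term N f1" "smooth_term N f2" "has_gradient_on N f f1 f2"
    "smooth_term N g1" "smooth_term N g2" "has_gradient_on N g g1 g2"
    by blast
  with smooth_term_mult.hyps show ?case
    by (intro exI[of _ "\<lambda>t x. f t x * g1 t x + f1 t x * g t x"]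
        exI[of _ "\<lambda>t x. f t x * g2 t x + f2 t x * g t x"] conjI
        smooth_term.smooth_term_add smooth_term.smooth_term_mult has_gradient_on_mult)
next
  case (smooth_term_comp g S D)
  then obtain g1 g2 where g: "smooth_term N g1" "smooth_term N g2" "has_gradient_on N g g1 g2"
    by blast
  have D1: "smooth_term N (\<lambda>t x. D 1 (g t x))"
    using smooth_term.smooth_term_comp[of N g S "\<lambda>k. D (Suc k)"] smooth_term_comp.hyps by auto
  have "has_gradient_on N (\<lambda>t x. D 0 (g t x))
      (\<lambda>t x. D 1 (g t x) * g1 t x) (\<lambda>t x. D 1 (g t x) * g2 t x)"
    using smooth_term_comp.hyps by (intro has_gradient_on_comp[OF g(3)]) auto
  with D1 g show ?case
    by (intro exI[of _ "\<lambda>t x. D 1 (g t x) * g1 t x"] exI[of _ "\<lambda>t x. D 1 (g t x) * g2 t x"] conjI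
        smooth_term.smooth_term_mult)
qed

lemma smooth_term_diff:
  assumes "smooth_term N f" "smooth_term N g"
  shows "smooth_term N (\<lambda>t x. f t x - g t x)"
proof -
  have "smooth_term N (\<lambda>t x. f t x + (\<lambda>t x. -1) t x * g t x)"
    by (intro smooth_term_add smooth_term_mult smooth_term_const assms)
  then show ?thesis by simp
qed

lemma smooth_term_power: "smooth_term N f \<Longrightarrow> smooth_term N (\<lambda>t x. f t x ^ n)"
  by (induction n) (auto intro: smooth_term_const smooth_term_mult[of N f "\<lambda>t x. f t x ^ _", simplified])

definition ln_derivs :: "nat \<Rightarrow> real \<Rightarrow> real" where
  "ln_derivs k y = (if k = 0 then ln y else (-1) ^ (k - 1) * fact (k - 1) / y ^ k)"

lemma ln_derivs_has_real_derivative: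
  assumes "0 < y"
  shows "(ln_derivs k has_real_derivative ln_derivs (Suc k) y) (at y)"
proof (cases k)
  case 0
  with assms show ?thesis
    unfolding ln_derivs_def by (auto intro!: derivative_eq_intros)
next
  case (Suc m)
  have "((\<lambda>y. (-1) ^ m * fact m / y ^ Suc m) has_real_derivative
        (-1) ^ Suc m * fact (Suc m) / y ^ Suc (Suc m)) (at y)"
    using assms by (auto intro!: derivative_eq_intros simp: field_simps) (cases m, auto)
  moreover have "ln_derivs k = (\<lambda>y. (-1) ^ m * fact m / y ^ Suc m)"
    using Suc by (auto simp: ln_derivs_def fun_eq_iff)
  ultimately show ?thesis
    using Suc by (simp add: ln_derivs_def)
qed

lemma smooth_term_ln:
  assumes "smooth_term N g" "\<forall>z\<in>N. 0 < g (fst z) (snd z)"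
  shows "smooth_term N (\<lambda>t x. ln (g t x))"
  using smooth_term_comp[of N g "{0<..}" ln_derivs] assms ln_derivs_has_real_derivative
  by (simp add: ln_derivs_def)

lemma pt_eqI:
  assumes "open S" "t \<in> S" "\<And>s. s \<in> S \<Longrightarrow> f s x = h s" "(h has_real_derivative d) (at t)"
  shows "pt f t x = d"
proof -
  have "\<forall>\<^sub>F s in nhds t. f s x = h s"
    using assms(1-3) eventually_nhds by blast
  then have "pt f t x = deriv h t"
    unfolding pt_def by (rule deriv_cong_ev) simp
  with assms(4) show ?thesis
    by (simp add: DERIV_imp_deriv)
qed

lemma px_eqI:
  assumes "open S" "x \<in> S" "\<And>y. y \<in> S \<Longrightarrow> f t y = h y" "(h has_real_derivative d) (at x)"
  shows "px f t x = d"
proof -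
  have "\<forall>\<^sub>F y in nhds x. f t y = h y"
    using assms(1-3) eventually_nhds by blast
  then have "px f t x = deriv h x"
    unfolding px_def by (rule deriv_cong_ev) simp
  with assms(4) show ?thesis
    by (simp add: DERIV_imp_deriv)
qed

lemma pt_px_cong:
  assumes "open N" "\<forall>z\<in>N. f (fst z) (snd z) = g (fst z) (snd z)" "(t, x) \<in> N"
  shows "pt f t x = pt g t x" "px f t x = px g t x"
proof -
  obtain e where e: "e > 0" "ball (t, x) e \<subseteq> N"
    using assms(1,3) open_contains_ball by blast
  have "(s, x) \<in> N" if "dist s t < e" for s
    using that e(2) by (auto simp: dist_Pair_Pair dist_commute subset_iff)
  then have "\<forall>\<^sub>F s in nhds t. f s x = g s x"
    unfolding eventually_nhds_metric using e(1) assms(2) by force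
  then show "pt f t x = pt g t x"
    unfolding pt_def by (rule deriv_cong_ev) simp
  have "(t, y) \<in> N" if "dist y x < e" for y
    using that e(2) by (auto simp: dist_Pair_Pair dist_commute subset_iff)
  then have "\<forall>\<^sub>F y in nhds x. f t y = g t y"
    unfolding eventually_nhds_metric using e(1) assms(2) by force
  then show "px f t x = px g t x"
    unfolding px_def by (rule deriv_cong_ev) simp
qed

lemma Ck_on_cong:
  assumes "open N" "\<forall>z\<in>N. f (fst z) (snd z) = g (fst z) (snd z)" "Ck_on k N f"
  shows "Ck_on k N g"
  using assms(2,3)
proof (induction k arbitrary: f g)
  case 0
  then show ?case
    by (auto intro: continuous_on_cong[THEN iffD1, rotated 2] simp: case_prod_beta')
next
  case (Suc k)
  have "(\<lambda>(t, x). g t x) differentiable (at z)" if z: "z \<in> N" for z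
  proof -
    obtain D where "((\<lambda>(t, x). f t x) has_derivative D) (at z)"
      using Suc.prems z by (auto simp: differentiable_def)
    then have "((\<lambda>(t, x). g t x) has_derivative D) (at z)"
      by (rule has_derivative_transform_within_open[OF _ assms(1) z])
         (use Suc.prems in \<open>auto simp: case_prod_beta'\<close>)
    then show ?thesis by (auto simp: differentiable_def)
  qed
  moreover have "Ck_on k N (pt g)" "Ck_on k N (px g)"
    using Suc.IH[of "pt f" "pt g"] Suc.IH[of "px f" "px g"] Suc.prems
      pt_px_cong[OF assms(1) Suc.prems(1)] by auto
  ultimately show ?case by simp
qed

lemma smooth_term_Ck_on:
  assumes "open N" "smooth_term N f"
  shows "Ck_on k N f"
  using assms(2)
proof (induction k arbitrary: f)
  case 0
  then obtain f1 f2 where "has_gradient_on N f f1 f2"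
    using smooth_term_has_gradient_on by blast
  then show ?case
    using has_gradient_on_differentiable
    by (auto intro!: continuous_at_imp_continuous_on differentiable_imp_continuous_within)
next
  case (Suc k)
  then obtain f1 f2 where f: "smooth_term N f1" "smooth_term N f2" "has_gradient_on N f f1 f2"
    using smooth_term_has_gradient_on by blast
  have "Ck_on k N (pt f)" "Ck_on k N (px f)"
    using Ck_on_cong[OF assms(1) _ Suc.IH[OF f(1)]] Ck_on_cong[OF assms(1) _ Suc.IH[OF f(2)]]
      has_gradient_on_partials[OF f(3)] by auto
  moreover have "\<forall>z\<in>N. (\<lambda>(t, x). f t x) differentiable (at z)"
    using has_gradient_on_differentiable[OF f(3)] by blast
  ultimately show ?case by simp
qed

lemma smooth2_on_smooth_term:
  assumes "open N" "smooth_term N f"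
  shows "smooth2_on N f"
  using assms smooth_term_Ck_on unfolding smooth2_on_def by blast

lemma smooth2_on_cong:
  assumes "open N" "\<forall>z\<in>N. f (fst z) (snd z) = g (fst z) (snd z)" "smooth2_on N f"
  shows "smooth2_on N g"
  using assms Ck_on_cong unfolding smooth2_on_def by blast

lemma second_partials_cong:
  assumes "open N" "\<forall>z\<in>N. f (fst z) (snd z) = g (fst z) (snd z)" "(t, x) \<in> N"
  shows "pt (pt f) t x = pt (pt g) t x" "px (px f) t x = px (px g) t x"
proof -
  have "\<forall>z\<in>N. pt f (fst z) (snd z) = pt g (fst z) (snd z)"
       "\<forall>z\<in>N. px f (fst z) (snd z) = px g (fst z) (snd z)"
    using pt_px_cong[OF assms(1,2)] by auto
  then show "pt (pt f) t x = pt (pt g) t x" "px (px f) t x = px (px g) t x"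
    using pt_px_cong[OF assms(1) _ assms(3)] by blast+
qed

lemma solves_A_cong:
  assumes "open N" "\<forall>z\<in>N. f (fst z) (snd z) = g (fst z) (snd z)" "solves_A N f"
  shows "solves_A N g"
  using assms Ck_on_cong[OF assms(1,2)] pt_px_cong[OF assms(1,2)] second_partials_cong[OF assms(1,2)]
  unfolding solves_A_def by fastforce

lemma solves_B_cong:
  assumes "open N" "\<forall>z\<in>N. f (fst z) (snd z) = g (fst z) (snd z)" "solves_B N f"
  shows "solves_B N g"
  using assms Ck_on_cong[OF assms(1,2)] pt_px_cong[OF assms(1,2)] second_partials_cong[OF assms(1,2)]
  unfolding solves_B_def by fastforce

section \<open>The explicit logarithmic blow-up solutions\<close>

lemma Gamma_similarity_variable:
  assumes "(t, x) \<in> Gamma T x0"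
  shows "0 < T - t" "\<bar>(x - x0) / (T - t)\<bar> \<le> 1"
proof -
  have "t < T" "\<bar>x - x0\<bar> \<le> T - t"
    using assms unfolding Gamma_def by auto
  then show "0 < T - t" "\<bar>(x - x0) / (T - t)\<bar> \<le> 1"
    by (simp_all add: abs_divide)
qed

lemma Gamma_one_minus_time_pos:
  assumes "(t, x) \<in> Gamma T x0" "0 < T"
  shows "0 < 1 - t / T"
  using Gamma_similarity_variable(1)[OF assms(1)] assms(2) by (simp add: field_simps)

lemma Gamma_one_plus_similarity_pos:
  assumes "(t, x) \<in> Gamma T x0" "\<bar>c\<bar> < 1"
  shows "0 < 1 + c * ((x - x0) / (T - t))"
proof -
  have "\<bar>c * ((x - x0) / (T - t))\<bar> \<le> \<bar>c\<bar>"
    using mult_left_le[OF Gamma_similarity_variable(2)[OF assms(1)] abs_ge_zero[of c]]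
    by (simp only: abs_mult)
  with assms(2) show ?thesis by linarith
qed

lemma log_linear_solves_A:
  fixes \<alpha> c T x0 k :: real
  assumes c: "c\<^sup>2 = 1 - \<alpha>" and N: "open N" "\<forall>(t, x)\<in>N. 0 < T - t - c * (x - x0)"
  defines "v \<equiv> \<lambda>t x. - \<alpha> * ln (T - t - c * (x - x0)) + k"
  shows "smooth2_on N v" "solves_A N v"
proof -
  define L where "L t x = T - t - c * (x - x0)" for t x
  have v: "v = (\<lambda>t x. - \<alpha> * ln (L t x) + k)"
    unfolding v_def L_def ..
  have open_L: "open {s. 0 < L s x}" "open {y. 0 < L t y}" for t x
    unfolding L_def by (intro open_Collect_less continuous_intros)+
  show smooth: "smooth2_on N v"
    unfolding v L_def using N
    by (intro smooth2_on_smooth_term smooth_term_add smooth_term_mult smooth_term_const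
        smooth_term_diff smooth_term_fst smooth_term_snd smooth_term_ln) auto
  have pt1: "pt v t x = \<alpha> / L t x" if "0 < L t x" for t x
    by (rule pt_eqI[OF open_L(1), where h="\<lambda>s. v s x"])
       (use that in \<open>auto simp: v L_def intro!: derivative_eq_intros\<close>)
  have px1: "px v t x = \<alpha> * c / L t x" if "0 < L t x" for t x
    by (rule px_eqI[OF open_L(2), where h="\<lambda>y. v t y"])
       (use that in \<open>auto simp: v L_def intro!: derivative_eq_intros\<close>)
  have pt2: "pt (pt v) t x = \<alpha> / (L t x)\<^sup>2" if "0 < L t x" for t x
    by (rule pt_eqI[OF open_L(1), where h="\<lambda>s. \<alpha> / L s x"])
       (use that pt1 in \<open>auto simp: L_def power2_eq_square intro!: derivative_eq_intros\<close>)
  have px2: "px (px v) t x = \<alpha> * c\<^sup>2 / (L t x)\<^sup>2" if "0 < L t x" for t x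
    by (rule px_eqI[OF open_L(2), where h="\<lambda>y. \<alpha> * c / L t y"])
       (use that px1 in \<open>auto simp: L_def power2_eq_square intro!: derivative_eq_intros\<close>)
  have "pt (pt v) t x - px (px v) t x = (pt v t x)\<^sup>2" if "0 < L t x" for t x
  proof -
    have "pt (pt v) t x - px (px v) t x = \<alpha> * (1 - c\<^sup>2) / (L t x)\<^sup>2"
      using that by (simp add: pt2 px2 diff_divide_distrib right_diff_distrib)
    also have "\<dots> = (pt v t x)\<^sup>2"
      using c that by (simp add: pt1 power_divide power2_eq_square)
    finally show ?thesis .
  qed
  with smooth N(2) show "solves_A N v"
    unfolding solves_A_def smooth2_on_def L_def by auto
qed

lemma gss_A_solution:
  fixes \<alpha> c \<kappa> T x0 :: real
  assumes \<alpha>: "0 < \<alpha>" and c: "c\<^sup>2 = 1 - \<alpha>" and T: "0 < T"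
  defines "u \<equiv> gss \<alpha> (\<lambda>y. - \<alpha> * ln (1 - c * y)) \<kappa> T x0"
  shows "\<exists>N. open N \<and> Gamma T x0 \<subseteq> N \<and> smooth2_on N u \<and> solves_A N u"
proof -
  define L where "L t x = T - t - c * (x - x0)" for t x
  define N where "N = {z. fst z < T \<and> 0 < L (fst z) (snd z)}"
  have "open N"
    unfolding N_def L_def by (intro open_Collect_conj open_Collect_less continuous_intros)
  have "\<bar>c\<bar> < 1"
    using c \<alpha> by (simp add: abs_square_less_1[symmetric])
  have "Gamma T x0 \<subseteq> N"
  proof clarify
    fix t x assume tx: "(t, x) \<in> Gamma T x0"
    note tT = Gamma_similarity_variable(1)[OF tx]
    have "L t x = (T - t) * (1 + (- c) * ((x - x0) / (T - t)))"
      using tT unfolding L_def by (simp add: field_simps)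
    also have "0 < \<dots>"
      using tT Gamma_one_plus_similarity_pos[OF tx, of "- c"] \<open>\<bar>c\<bar> < 1\<close> by simp
    finally show "(t, x) \<in> N"
      using tT unfolding N_def by simp
  qed
  have "u t x = - \<alpha> * ln (L t x) + (\<alpha> * ln T + \<kappa>)" if "(t, x) \<in> N" for t x
  proof -
    have tT: "0 < T - t" and L: "0 < L t x"
      using that unfolding N_def by auto
    have "1 - t / T = (T - t) / T" "1 - c * ((x - x0) / (T - t)) = L t x / (T - t)"
      using T tT unfolding L_def by (simp_all add: field_simps)
    then have "ln (1 - t / T) = ln (T - t) - ln T"
      "ln (1 - c * ((x - x0) / (T - t))) = ln (L t x) - ln (T - t)"
      using T tT L by (simp_all add: ln_div)
    then have "ln (L t x) = ln T + ln (1 - t / T) + ln (1 - c * ((x - x0) / (T - t)))"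
      by linarith
    then show ?thesis
      unfolding u_def gss_def by (simp add: algebra_simps)
  qed
  then have eq: "\<forall>z\<in>N. - \<alpha> * ln (L (fst z) (snd z)) + (\<alpha> * ln T + \<kappa>) = u (fst z) (snd z)"
    by auto
  have "smooth2_on N (\<lambda>t x. - \<alpha> * ln (L t x) + (\<alpha> * ln T + \<kappa>))"
    "solves_A N (\<lambda>t x. - \<alpha> * ln (L t x) + (\<alpha> * ln T + \<kappa>))"
    using log_linear_solves_A[OF c \<open>open N\<close>] unfolding N_def L_def by auto
  with smooth2_on_cong[OF \<open>open N\<close> eq] solves_A_cong[OF \<open>open N\<close> eq]
  show ?thesis
    using \<open>open N\<close> \<open>Gamma T x0 \<subseteq> N\<close> by blast
qed

(* e^(-v) = e^(-k) Q is a superposition of two travelling waves, and (B) for v is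
   the wave equation for e^(-v). *)
lemma neg_log_wave_solves_B:
  fixes \<beta> T x0 k :: real and n :: nat
  defines "Q \<equiv> \<lambda>t x. (T - t + (x - x0)) ^ n + \<beta> * (T - t - (x - x0)) ^ n"
  assumes N: "open N" "\<forall>(t, x)\<in>N. 0 < Q t x"
  defines "v \<equiv> \<lambda>t x. k - ln (Q t x)"
  shows "smooth2_on N v" "solves_B N v"
proof -
  have open_Q: "open {s. 0 < Q s x}" "open {y. 0 < Q t y}" for t x
    unfolding Q_def by (intro open_Collect_less continuous_intros)+
  show smooth: "smooth2_on N v"
    using N unfolding v_def Q_def
    by (intro smooth2_on_smooth_term smooth_term_add smooth_term_mult smooth_term_const smooth_term_power
        smooth_term_diff smooth_term_fst smooth_term_snd smooth_term_ln) auto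
  define P where "P t x = real n * (T - t + (x - x0)) ^ (n - 1)" for t x
  define R where "R t x = \<beta> * real n * (T - t - (x - x0)) ^ (n - 1)" for t x
  define P2 where "P2 t x = real n * real (n - 1) * (T - t + (x - x0)) ^ (n - 1 - 1)" for t x
  define R2 where "R2 t x = \<beta> * real n * real (n - 1) * (T - t - (x - x0)) ^ (n - 1 - 1)" for t x
  have pt1: "pt v t x = (P t x + R t x) / Q t x" if "0 < Q t x" for t x
    by (rule pt_eqI[OF open_Q(1)[where x=x], where h="\<lambda>s. v s x"])
       (use that in \<open>auto intro!: derivative_eq_intros simp: v_def Q_def P_def R_def field_simps\<close>)
  have px1: "px v t x = (R t x - P t x) / Q t x" if "0 < Q t x" for t x
    by (rule px_eqI[OF open_Q(2)[where t=t], where h="\<lambda>y. v t y"])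
       (use that in \<open>auto intro!: derivative_eq_intros simp: v_def Q_def P_def R_def field_simps\<close>)
  have dpt1: "((\<lambda>s. (P s x + R s x) / Q s x) has_real_derivative
      ((P t x + R t x)\<^sup>2 - (P2 t x + R2 t x) * Q t x) / (Q t x)\<^sup>2) (at t)"
    if "0 < Q t x" for t x
    using that by (auto intro!: derivative_eq_intros
        simp: Q_def P_def R_def P2_def R2_def field_simps power2_eq_square)
  have dpx1: "((\<lambda>y. (R t y - P t y) / Q t y) has_real_derivative
      ((R t x - P t x)\<^sup>2 - (P2 t x + R2 t x) * Q t x) / (Q t x)\<^sup>2) (at x)"
    if "0 < Q t x" for t x
    using that by (auto intro!: derivative_eq_intros
        simp: Q_def P_def R_def P2_def R2_def field_simps power2_eq_square)
  have pt2: "pt (pt v) t x = ((P t x + R t x)\<^sup>2 - (P2 t x + R2 t x) * Q t x) / (Q t x)\<^sup>2"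
    if "0 < Q t x" for t x
    by (rule pt_eqI[OF open_Q(1)[where x=x] _ _ dpt1[OF that]]) (use that pt1 in auto)
  have px2: "px (px v) t x = ((R t x - P t x)\<^sup>2 - (P2 t x + R2 t x) * Q t x) / (Q t x)\<^sup>2"
    if "0 < Q t x" for t x
    by (rule px_eqI[OF open_Q(2)[where t=t] _ _ dpx1[OF that]]) (use that px1 in auto)
  have "pt (pt v) t x - px (px v) t x = (pt v t x)\<^sup>2 - (px v t x)\<^sup>2" if "0 < Q t x" for t x
    using that by (simp add: pt1 px1 pt2 px2 field_simps power2_eq_square)
  with smooth N(2) show "solves_B N v"
    unfolding solves_B_def smooth2_on_def by auto
qed

lemma Gamma_U_B_arg_pos:
  assumes "(t, x) \<in> Gamma T x0" "0 < \<beta>"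
  shows "0 < (1 + (x - x0) / (T - t)) ^ n + \<beta> * (1 - (x - x0) / (T - t)) ^ n"
proof -
  define y where "y = (x - x0) / (T - t)"
  have "\<bar>y\<bar> \<le> 1"
    using Gamma_similarity_variable(2)[OF assms(1)] unfolding y_def .
  then have y: "-1 \<le> y" "y \<le> 1"
    by arith+
  have "0 < (1 + y) ^ n + \<beta> * (1 - y) ^ n"
  proof (cases "y = -1")
    case False
    with y have "0 < 1 + y" by simp
    with y assms(2) show ?thesis by (intro add_pos_nonneg) auto
  next
    case True
    with assms(2) show ?thesis by (intro add_nonneg_pos) auto
  qed
  then show ?thesis unfolding y_def .
qed

lemma gss_B_solution:
  fixes \<beta> \<kappa> T x0 :: real and n :: nat
  assumes \<beta>: "0 < \<beta>" and T: "0 < T"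
  defines "u \<equiv> gss (real n) (U_B n \<beta>) \<kappa> T x0"
  shows "\<exists>N. open N \<and> Gamma T x0 \<subseteq> N \<and> smooth2_on N u \<and> solves_B N u"
proof -
  define Q where "Q t x = (T - t + (x - x0)) ^ n + \<beta> * (T - t - (x - x0)) ^ n" for t x
  define N where "N = {z. fst z < T \<and> 0 < Q (fst z) (snd z)}"
  have "open N"
    unfolding N_def Q_def by (intro open_Collect_conj open_Collect_less continuous_intros)
  have Q_eq: "Q t x = (T - t) ^ n * ((1 + (x - x0) / (T - t)) ^ n + \<beta> * (1 - (x - x0) / (T - t)) ^ n)"
    if "t < T" for t x
  proof -
    have "1 + (x - x0) / (T - t) = (T - t + (x - x0)) / (T - t)"
      "1 - (x - x0) / (T - t) = (T - t - (x - x0)) / (T - t)"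
      using that by (simp_all add: field_simps)
    then show ?thesis
      using that unfolding Q_def by (simp add: power_divide field_simps)
  qed
  have "Gamma T x0 \<subseteq> N"
  proof clarify
    fix t x assume tx: "(t, x) \<in> Gamma T x0"
    then show "(t, x) \<in> N"
      using Gamma_similarity_variable(1)[OF tx] Gamma_U_B_arg_pos[OF tx \<beta>] Q_eq[of t x]
      unfolding N_def by simp
  qed
  have "u t x = real n * ln T + ln (1 + \<beta>) + \<kappa> - ln (Q t x)" if "(t, x) \<in> N" for t x
  proof -
    have tT: "0 < T - t" and Q: "0 < Q t x"
      using that unfolding N_def by auto
    have "1 - t / T = (T - t) / T"
      using T by (simp add: field_simps)
    then have "ln (T - t) = ln T + ln (1 - t / T)"
      using T tT by (simp add: ln_div)
    moreover have "ln (Q t x) = real n * ln (T - t)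
        + ln ((1 + (x - x0) / (T - t)) ^ n + \<beta> * (1 - (x - x0) / (T - t)) ^ n)"
      using Q_eq[of t x] tT Q by (simp add: ln_mult ln_realpow zero_less_mult_iff)
    ultimately have "ln (Q t x) = real n * ln T + real n * ln (1 - t / T)
        + ln ((1 + (x - x0) / (T - t)) ^ n + \<beta> * (1 - (x - x0) / (T - t)) ^ n)"
      by (simp add: distrib_left)
    then show ?thesis
      unfolding u_def gss_def U_B_def by (simp add: algebra_simps)
  qed
  then have eq: "\<forall>z\<in>N. real n * ln T + ln (1 + \<beta>) + \<kappa> - ln (Q (fst z) (snd z)) = u (fst z) (snd z)"
    by auto
  have "smooth2_on N (\<lambda>t x. real n * ln T + ln (1 + \<beta>) + \<kappa> - ln (Q t x))"
    "solves_B N (\<lambda>t x. real n * ln T + ln (1 + \<beta>) + \<kappa> - ln (Q t x))"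
    using neg_log_wave_solves_B[OF \<open>open N\<close>] unfolding N_def Q_def by auto
  with smooth2_on_cong[OF \<open>open N\<close> eq] solves_B_cong[OF \<open>open N\<close> eq]
  show ?thesis
    using \<open>open N\<close> \<open>Gamma T x0 \<subseteq> N\<close> by blast
qed

lemma gss_blowup:
  assumes "0 < \<alpha>" "0 < T"
  shows "filterlim (\<lambda>t. gss \<alpha> U \<kappa> T x0 t x0) at_top (at_left T)"
  using assms unfolding gss_def by simp real_asymp

lemma log_blowup_solutions_A:
  assumes \<alpha>: "0 < \<alpha>" "\<alpha> \<le> 1" and T: "0 < T" and U: "U \<in> {U_A0 \<alpha>, U_Ainf \<alpha>}"
  shows "(\<forall>(t, x)\<in>Gamma T x0. 1 - t / T > 0 \<and>
            1 - sqrt (1 - \<alpha>) * ((x - x0) / (T - t)) > 0 \<and>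
            1 + sqrt (1 - \<alpha>) * ((x - x0) / (T - t)) > 0) \<and>
         (\<exists>N. open N \<and> Gamma T x0 \<subseteq> N \<and> smooth2_on N (gss \<alpha> U \<kappa> T x0) \<and> solves_A N (gss \<alpha> U \<kappa> T x0)) \<and>
         filterlim (\<lambda>t. gss \<alpha> U \<kappa> T x0 t x0) at_top (at_left T)"
proof -
  have s: "\<bar>sqrt (1 - \<alpha>)\<bar> < 1" "\<bar>- sqrt (1 - \<alpha>)\<bar> < 1" "(sqrt (1 - \<alpha>))\<^sup>2 = 1 - \<alpha>"
    using \<alpha> by (simp_all add: real_sqrt_less_iff)
  obtain c where c: "c \<in> {sqrt (1 - \<alpha>), - sqrt (1 - \<alpha>)}" "U = (\<lambda>y. - \<alpha> * ln (1 - c * y))"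
  proof -
    have "U_Ainf \<alpha> = (\<lambda>y. - \<alpha> * ln (1 - (- sqrt (1 - \<alpha>)) * y))"
      unfolding U_Ainf_def by simp
    with U that show ?thesis
      unfolding U_A0_def by blast
  qed
  have "\<forall>(t, x)\<in>Gamma T x0. 1 - t / T > 0 \<and>
            1 - sqrt (1 - \<alpha>) * ((x - x0) / (T - t)) > 0 \<and>
            1 + sqrt (1 - \<alpha>) * ((x - x0) / (T - t)) > 0"
    using Gamma_one_minus_time_pos[OF _ T] Gamma_one_plus_similarity_pos[OF _ s(1)]
      Gamma_one_plus_similarity_pos[OF _ s(2)] by auto
  moreover have "c\<^sup>2 = 1 - \<alpha>"
    using c(1) s(3) by auto
  then have "\<exists>N. open N \<and> Gamma T x0 \<subseteq> N \<and> smooth2_on N (gss \<alpha> U \<kappa> T x0) \<and> solves_A N (gss \<alpha> U \<kappa> T x0)"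
    unfolding c(2) by (rule gss_A_solution[OF \<alpha>(1) _ T])
  ultimately show ?thesis
    using gss_blowup[OF \<alpha>(1) T] by blast
qed

lemma log_blowup_solutions_B:
  fixes \<beta> \<kappa> T x0 :: real and n :: nat
  assumes n: "1 \<le> n" and \<beta>: "0 < \<beta>" and T: "0 < T"
  shows "(\<forall>(t, x)\<in>Gamma T x0. 1 - t / T > 0 \<and>
            (1 + (x - x0) / (T - t)) ^ n + \<beta> * (1 - (x - x0) / (T - t)) ^ n > 0) \<and>
         (\<exists>N. open N \<and> Gamma T x0 \<subseteq> N \<and>
            smooth2_on N (gss (real n) (U_B n \<beta>) \<kappa> T x0) \<and> solves_B N (gss (real n) (U_B n \<beta>) \<kappa> T x0)) \<and>
         filterlim (\<lambda>t. gss (real n) (U_B n \<beta>) \<kappa> T x0 t x0) at_top (at_left T)"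
  using Gamma_one_minus_time_pos[OF _ T] Gamma_U_B_arg_pos[OF _ \<beta>] gss_B_solution[OF \<beta> T]
    gss_blowup[of "real n", OF _ T] n by auto

section \<open>A Riccati equation without nontrivial solutions on (-1, 1)\<close>

lemma riccati_reciprocal_minus_primitive_const:
  fixes V G g :: "real \<Rightarrow> real"
  assumes dV: "\<And>y. y \<in> {a..z} \<Longrightarrow> (V has_real_derivative - (V y)\<^sup>2 * g y) (at y)"
    and dG: "\<And>y. y \<in> {a..z} \<Longrightarrow> (G has_real_derivative g y) (at y)"
    and nz: "\<And>y. y \<in> {a..z} \<Longrightarrow> V y \<noteq> 0" and "a \<le> z"
  shows "1 / V z - G z = 1 / V a - G a"
proof (cases "a = z")
  case False
  with \<open>a \<le> z\<close> have "a < z" by simp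
  have d: "((\<lambda>w. 1 / V w - G w) has_real_derivative 0) (at w)" if "w \<in> {a..z}" for w
    using DERIV_diff[OF DERIV_inverse_fun[OF dV[OF that] nz[OF that]] dG[OF that]] nz[OF that]
    by (simp add: inverse_eq_divide power2_eq_square)
  then show ?thesis
    by (intro DERIV_isconst_end[OF \<open>a < z\<close>] continuous_at_imp_continuous_on ballI DERIV_isCont) auto
qed simp

(* On [a, c), with c the first zero of V (or b), V (G + C) = 1 for the constant
   C = 1/V(a) - G(a); by continuity this also holds at c, where it fails. *)
lemma riccati_no_crossing:
  fixes V G g :: "real \<Rightarrow> real"
  assumes dV: "\<And>y. y \<in> {a..b} \<Longrightarrow> (V has_real_derivative - (V y)\<^sup>2 * g y) (at y)"
    and dG: "\<And>y. y \<in> {a..b} \<Longrightarrow> (G has_real_derivative g y) (at y)"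
    and ab: "a < b" "V a \<noteq> 0" "G b = G a - 1 / V a"
  shows False
proof -
  define C where "C = 1 / V a - G a"
  define Z where "Z = {z \<in> {a..b}. V z = 0} \<union> {b}"
  define c where "c = Inf Z"
  have "continuous_on {a..b} V"
    using dV by (intro continuous_at_imp_continuous_on ballI DERIV_isCont) auto
  then have "closed Z"
    unfolding Z_def by (intro closed_Un continuous_closed_preimage_constant) auto
  have "bdd_below Z"
    unfolding Z_def by (rule bdd_belowI[of _ a]) (use ab in auto)
  then have "c \<in> Z" "c \<le> b"
    using closed_contains_Inf[OF _ _ \<open>closed Z\<close>] cInf_lower unfolding c_def Z_def by auto
  with ab have "a < c"
    unfolding Z_def by (cases "c = a") auto
  have nz: "V z \<noteq> 0" if "a \<le> z" "z < c" for z
    using cInf_lower[OF _ \<open>bdd_below Z\<close>, of z] that \<open>c \<le> b\<close> unfolding c_def Z_def by force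
  have "V z * (G z + C) = 1" if "a < z" "z < c" for z
  proof -
    have "1 / V z - G z = C"
      unfolding C_def using that \<open>c \<le> b\<close> nz
      by (intro riccati_reciprocal_minus_primitive_const[OF dV dG]) auto
    with nz[of z] that show ?thesis
      by (simp add: field_simps)
  qed
  then have "((\<lambda>z. V z * (G z + C)) \<longlongrightarrow> 1) (at_left c)"
    by (intro tendsto_eventually eventually_mono[OF eventually_at_left_real[OF \<open>a < c\<close>]]) auto
  moreover have "((\<lambda>z. V z * (G z + C)) \<longlongrightarrow> V c * (G c + C)) (at_left c)"
    using \<open>a < c\<close> \<open>c \<le> b\<close> DERIV_isCont[OF dV] DERIV_isCont[OF dG]
    by (intro tendsto_intros isCont_tendsto_compose[of _ V] isCont_tendsto_compose[of _ G] tendsto_ident_at) auto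
  ultimately have "V c * (G c + C) = 1"
    using tendsto_unique[OF trivial_limit_at_left_real] by blast
  with \<open>c \<in> Z\<close> ab show False
    unfolding Z_def C_def by auto
qed

lemma riccati_vanishes:
  fixes V G g :: "real \<Rightarrow> real"
  assumes I: "connected I"
    and dV: "\<And>y. y \<in> I \<Longrightarrow> (V has_real_derivative - (V y)\<^sup>2 * g y) (at y)"
    and dG: "\<And>y. y \<in> I \<Longrightarrow> (G has_real_derivative g y) (at y)"
    and surj: "G ` I = UNIV" and y: "y \<in> I"
  shows "V y = 0"
proof (rule ccontr)
  assume V: "V y \<noteq> 0"
  have "G y - 1 / V y \<in> G ` I"
    using surj by simp
  then obtain b where "b \<in> I" "G y - 1 / V y = G b"
    by (rule imageE)
  then have b: "b \<in> I" "G b = G y - 1 / V y"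
    by simp_all
  with V have "b \<noteq> y"
    by auto
  consider "y < b" | "b < y"
    using \<open>b \<noteq> y\<close> by linarith
  then show False
  proof cases
    case 1
    have "(V has_real_derivative - (V z)\<^sup>2 * g z) (at z)" "(G has_real_derivative g z) (at z)"
      if "z \<in> {y..b}" for z
      using dV dG subsetD[OF connected_contains_Icc[OF I y b(1)] that] by auto
    from riccati_no_crossing[OF this 1 V b(2)] show False .
  next
    case 2
    have "((\<lambda>s. - V (- s)) has_real_derivative - (- V (- z))\<^sup>2 * g (- z)) (at z)"
      "((\<lambda>s. - G (- s)) has_real_derivative g (- z)) (at z)" if "z \<in> {-y..-b}" for z
    proof -
      have "- z \<in> I"
        using connected_contains_Icc[OF I b(1) y] that by auto
      from DERIV_minus[OF DERIV_chain2[OF dV[OF this] DERIV_minus[OF DERIV_ident]]]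
      show "((\<lambda>s. - V (- s)) has_real_derivative - (- V (- z))\<^sup>2 * g (- z)) (at z)"
        by simp
      from DERIV_minus[OF DERIV_chain2[OF dG[OF \<open>- z \<in> I\<close>] DERIV_minus[OF DERIV_ident]]]
      show "((\<lambda>s. - G (- s)) has_real_derivative g (- z)) (at z)"
        by simp
    qed
    from riccati_no_crossing[where a="- y" and b="- b", OF this] show False
      using 2 V b(2) by simp
  qed
qed

lemma surj_on_open_interval_if_limits:
  fixes G :: "real \<Rightarrow> real"
  assumes "l < r" "continuous_on {l<..<r} G"
    and "filterlim G at_top (at_right l)" "filterlim G at_bot (at_left r)"
  shows "G ` {l<..<r} = UNIV"
proof -
  define m where "m = (l + r) / 2"
  have m: "l < m" "m < r"
    using \<open>l < r\<close> unfolding m_def by auto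
  have "M \<in> G ` {l<..<r}" for M
  proof -
    have "\<forall>\<^sub>F s in at_right l. s \<in> {l<..<m} \<and> M \<le> G s"
      using eventually_at_right_real[OF m(1)] assms(3) unfolding filterlim_at_top
      by (auto elim: eventually_elim2)
    then obtain p where p: "p \<in> {l<..<m}" "M \<le> G p"
      using eventually_happens'[OF trivial_limit_at_right_real] by blast
    have "\<forall>\<^sub>F s in at_left r. s \<in> {m<..<r} \<and> G s \<le> M"
      using eventually_at_left_real[OF m(2)] assms(4) unfolding filterlim_at_bot
      by (auto elim: eventually_elim2)
    then obtain q where q: "q \<in> {m<..<r}" "G q \<le> M"
      using eventually_happens'[OF trivial_limit_at_left_real] by blast
    have "continuous_on {p..q} G"
      using p(1) q(1) by (auto intro: continuous_on_subset[OF assms(2)])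
    with p q obtain z where "p \<le> z" "z \<le> q" "G z = M"
      using IVT2'[of G q M p] by auto
    with p(1) q(1) show ?thesis
      by force
  qed
  then show ?thesis by blast
qed

lemma artanh_surj: "artanh ` {-1<..<1::real} = UNIV"
proof -
  have "tanh M \<in> {-1<..<1}" for M :: real
    using tanh_real_lt_1[of M] tanh_real_lt_1[of "- M"] by (simp add: tanh_minus)
  then show ?thesis
    by (metis UNIV_eq_I artanh_tanh_real image_eqI)
qed

definition riccati_primitive_A :: "real \<Rightarrow> real" where
  "riccati_primitive_A y = artanh y / 2 - y / (2 * (1 - y\<^sup>2))"

lemma riccati_primitive_A_has_real_derivative:
  assumes "-1 < y" "y < 1"
  shows "(riccati_primitive_A has_real_derivative - y\<^sup>2 / (1 - y\<^sup>2)\<^sup>2) (at y)"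
proof -
  have nz: "1 - y\<^sup>2 \<noteq> 0" "2 * (1 - y\<^sup>2) \<noteq> 0" and "\<bar>y\<bar> < 1"
    using assms by (auto simp: abs_square_eq_1)
  \<comment> \<open>the derivative exactly as the DERIV rules below produce it\<close>
  have quotient_rule_simp:
    "1 / r / 2 - (1 * (2 * r) - y * (2 * (0 - real 2 * (1 * y ^ (2 - Suc 0))))) / (2 * r * (2 * r))
      = - y\<^sup>2 / r\<^sup>2" if "r \<noteq> 0" for r :: real
    using that by (simp add: field_simps power2_eq_square)
  show ?thesis
    unfolding riccati_primitive_A_def[abs_def]
    by (rule DERIV_cong[OF DERIV_diff[OF DERIV_cdivide[OF artanh_real_has_field_derivative[OF \<open>\<bar>y\<bar> < 1\<close>]]
        DERIV_divide[OF DERIV_ident DERIV_cmult[OF DERIV_diff[OF DERIV_const DERIV_power[OF DERIV_ident]]] nz(2)]]])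
       (rule quotient_rule_simp[OF nz(1)])
qed

lemma riccati_primitive_A_surj: "riccati_primitive_A ` {-1<..<1} = UNIV"
proof (rule surj_on_open_interval_if_limits)
  show "continuous_on {-1<..<1} riccati_primitive_A"
    using riccati_primitive_A_has_real_derivative
    by (intro continuous_at_imp_continuous_on ballI DERIV_isCont) auto
  show "filterlim riccati_primitive_A at_top (at_right (-1))"
    unfolding riccati_primitive_A_def[abs_def] artanh_def by real_asymp
  show "filterlim riccati_primitive_A at_bot (at_left 1)"
    unfolding riccati_primitive_A_def[abs_def] artanh_def by real_asymp
qed simp

section \<open>Exact self-similar solutions are constant\<close>

lemma self_similar_partials:
  fixes U U1 U2 :: "real \<Rightarrow> real"
  assumes U1: "\<And>y. -1 < y \<Longrightarrow> y < 1 \<Longrightarrow> (U has_real_derivative U1 y) (at y)"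
    and U2: "\<And>y. -1 < y \<Longrightarrow> y < 1 \<Longrightarrow> (U1 has_real_derivative U2 y) (at y)"
    and tx: "\<bar>x - x0\<bar> < T - t"
  defines "u \<equiv> \<lambda>t x. U ((x - x0) / (T - t))" and "y \<equiv> (x - x0) / (T - t)"
  shows "(T - t) * pt u t x = y * U1 y" "(T - t) * px u t x = U1 y"
    "(T - t)\<^sup>2 * (pt (pt u) t x - px (px u) t x) = (y\<^sup>2 - 1) * U2 y + 2 * y * U1 y"
proof -
  have tT: "t < T"
    using tx by arith
  have in_cone: "-1 < (z - x0) / (T - s) \<and> (z - x0) / (T - s) < 1" if "\<bar>z - x0\<bar> < T - s" for s z
    using that by (auto simp: abs_less_iff divide_less_eq less_divide_eq)
  have dt: "((\<lambda>s. (x - x0) / (T - s)) has_real_derivative (x - x0) / (T - s)\<^sup>2) (at s)"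
    if "s \<noteq> T" for s
    using that by (auto intro!: derivative_eq_intros simp: field_simps power2_eq_square)
  have dx: "((\<lambda>z. (z - x0) / (T - t)) has_real_derivative 1 / (T - t)) (at z)" for z
    using tx by (auto intro!: derivative_eq_intros)
  have pt1: "pt u s x = U1 ((x - x0) / (T - s)) * ((x - x0) / (T - s)\<^sup>2)" if "\<bar>x - x0\<bar> < T - s" for s
    unfolding pt_def u_def using that in_cone[OF that]
    by (intro DERIV_imp_deriv DERIV_chain2[OF U1 dt]) auto
  have px1: "px u t z = U1 ((z - x0) / (T - t)) / (T - t)" if "\<bar>z - x0\<bar> < T - t" for z
    using DERIV_chain2[OF U1 dx, of z] in_cone[OF that]
    unfolding px_def u_def by (auto dest: DERIV_imp_deriv)
  have "((\<lambda>h. (x - x0) / h\<^sup>2) has_real_derivative - (2 * (x - x0) / h ^ 3)) (at h)" if "h \<noteq> 0" for h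
    using that by (auto intro!: derivative_eq_intros simp: field_simps power2_eq_square power3_eq_cube)
  from DERIV_chain2[OF this DERIV_diff[OF DERIV_const DERIV_ident], of T t]
  have dt2: "((\<lambda>s. (x - x0) / (T - s)\<^sup>2) has_real_derivative 2 * (x - x0) / (T - t) ^ 3) (at t)"
    using tx by simp
  have d_pt1: "((\<lambda>s. U1 ((x - x0) / (T - s)) * ((x - x0) / (T - s)\<^sup>2)) has_real_derivative
      U2 y * ((x - x0) / (T - t)\<^sup>2) * ((x - x0) / (T - t)\<^sup>2) + U1 y * (2 * (x - x0) / (T - t) ^ 3)) (at t)"
    using DERIV_mult[OF DERIV_chain2[OF U2 dt] dt2] tT in_cone[OF tx] unfolding y_def by (simp add: ac_simps)
  have pt2: "pt (pt u) t x =
      U2 y * ((x - x0) / (T - t)\<^sup>2) * ((x - x0) / (T - t)\<^sup>2) + U1 y * (2 * (x - x0) / (T - t) ^ 3)"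
    by (rule pt_eqI[where S="{s. \<bar>x - x0\<bar> < T - s}", OF _ _ _ d_pt1])
       (use tx pt1 in \<open>auto intro!: open_Collect_less continuous_intros\<close>)
  have d_px1: "((\<lambda>z. U1 ((z - x0) / (T - t)) / (T - t)) has_real_derivative U2 y / (T - t)\<^sup>2) (at x)"
    using DERIV_divide[OF DERIV_chain2[OF U2 dx, of x] DERIV_const[of "T - t"]] tx in_cone[OF tx]
    unfolding y_def by (auto simp: power2_eq_square)
  have px2: "px (px u) t x = U2 y / (T - t)\<^sup>2"
    by (rule px_eqI[where S="{z. \<bar>z - x0\<bar> < T - t}", OF _ _ _ d_px1])
       (use tx px1 in \<open>auto intro!: open_Collect_less continuous_intros\<close>)
  have h: "0 < T - t" "x - x0 = y * (T - t)"
    using tx unfolding y_def by auto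
  show "(T - t) * pt u t x = y * U1 y" "(T - t) * px u t x = U1 y"
    using pt1[OF tx] px1[OF tx] h unfolding y_def by (auto simp: power2_eq_square)
  show "(T - t)\<^sup>2 * (pt (pt u) t x - px (px u) t x) = (y\<^sup>2 - 1) * U2 y + 2 * y * U1 y"
  proof -
    have "h\<^sup>2 * (a * (y * h / h\<^sup>2) * (y * h / h\<^sup>2) + b * (2 * (y * h) / h ^ 3) - a / h\<^sup>2)
        = (y\<^sup>2 - 1) * a + 2 * y * b" if "h \<noteq> 0" for h a b :: real
      using that by (simp add: field_simps power2_eq_square power3_eq_cube)
    then show ?thesis
      unfolding pt2 px2 h(2) using h(1) by simp
  qed
qed

lemma open_cone_subset_interior_Gamma:
  "{(t, x). 0 < t \<and> \<bar>x - x0\<bar> < T - t} \<subseteq> interior (Gamma T x0)"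
proof (rule interior_maximal)
  show "{(t, x). 0 < t \<and> \<bar>x - x0\<bar> < T - t} \<subseteq> Gamma T x0"
    unfolding Gamma_def by auto
  have "open ({z. 0 < fst z} \<inter> {z. \<bar>snd z - x0\<bar> < T - fst z})"
    by (intro open_Int open_Collect_less continuous_intros)
  then show "open {(t, x). 0 < t \<and> \<bar>x - x0\<bar> < T - t}"
    by (simp add: Int_def case_prod_beta')
qed

lemma self_similar_partials_in_Gamma:
  fixes U U1 U2 :: "real \<Rightarrow> real" and T x0 y :: real
  assumes U1: "\<And>y. -1 < y \<Longrightarrow> y < 1 \<Longrightarrow> (U has_real_derivative U1 y) (at y)"
    and U2: "\<And>y. -1 < y \<Longrightarrow> y < 1 \<Longrightarrow> (U1 has_real_derivative U2 y) (at y)"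
    and T: "0 < T" and y: "-1 < y" "y < 1"
  defines "u \<equiv> \<lambda>t x. U ((x - x0) / (T - t))"
  obtains t x where "(t, x) \<in> interior (Gamma T x0)"
    "(T - t) * pt u t x = y * U1 y" "(T - t) * px u t x = U1 y"
    "(T - t)\<^sup>2 * (pt (pt u) t x - px (px u) t x) = (y\<^sup>2 - 1) * U2 y + 2 * y * U1 y"
proof -
  define t x where "t = T / 2" and "x = x0 + y * (T / 2)"
  have "(x - x0) / (T - t) = y"
    using T unfolding t_def x_def by simp
  moreover have tx: "\<bar>x - x0\<bar> < T - t"
    using T y unfolding t_def x_def by (simp add: abs_mult abs_less_iff)
  moreover have "(t, x) \<in> interior (Gamma T x0)"
    using open_cone_subset_interior_Gamma tx T unfolding t_def by fastforce
  ultimately show ?thesis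
    using that self_similar_partials[OF U1 U2 tx] unfolding u_def by simp
qed

lemma self_similar_solution_A_profile_ode:
  fixes U U1 U2 :: "real \<Rightarrow> real"
  assumes U1: "\<And>y. -1 < y \<Longrightarrow> y < 1 \<Longrightarrow> (U has_real_derivative U1 y) (at y)"
    and U2: "\<And>y. -1 < y \<Longrightarrow> y < 1 \<Longrightarrow> (U1 has_real_derivative U2 y) (at y)"
    and T: "0 < T" and sol: "solves_A (interior (Gamma T x0)) (\<lambda>t x. U ((x - x0) / (T - t)))"
    and y: "-1 < y" "y < 1"
  shows "(y\<^sup>2 - 1) * U2 y + 2 * y * U1 y = y\<^sup>2 * (U1 y)\<^sup>2"
proof -
  let ?u = "\<lambda>t x. U ((x - x0) / (T - t))"
  obtain t x where tx: "(t, x) \<in> interior (Gamma T x0)"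
    and pt: "(T - t) * pt ?u t x = y * U1 y"
    and wave: "(T - t)\<^sup>2 * (pt (pt ?u) t x - px (px ?u) t x) = (y\<^sup>2 - 1) * U2 y + 2 * y * U1 y"
    using self_similar_partials_in_Gamma[OF U1 U2 T y] by blast
  have "pt (pt ?u) t x - px (px ?u) t x = (pt ?u t x)\<^sup>2"
    using sol tx unfolding solves_A_def by fast
  then have "(y\<^sup>2 - 1) * U2 y + 2 * y * U1 y = ((T - t) * pt ?u t x)\<^sup>2"
    unfolding wave[symmetric] by (simp add: power_mult_distrib)
  then show ?thesis
    unfolding pt by (simp add: power_mult_distrib)
qed

lemma self_similar_solution_B_profile_ode:
  fixes U U1 U2 :: "real \<Rightarrow> real"
  assumes U1: "\<And>y. -1 < y \<Longrightarrow> y < 1 \<Longrightarrow> (U has_real_derivative U1 y) (at y)"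
    and U2: "\<And>y. -1 < y \<Longrightarrow> y < 1 \<Longrightarrow> (U1 has_real_derivative U2 y) (at y)"
    and T: "0 < T" and sol: "solves_B (interior (Gamma T x0)) (\<lambda>t x. U ((x - x0) / (T - t)))"
    and y: "-1 < y" "y < 1"
  shows "(y\<^sup>2 - 1) * U2 y + 2 * y * U1 y = (y\<^sup>2 - 1) * (U1 y)\<^sup>2"
proof -
  let ?u = "\<lambda>t x. U ((x - x0) / (T - t))"
  obtain t x where tx: "(t, x) \<in> interior (Gamma T x0)"
    and pt: "(T - t) * pt ?u t x = y * U1 y" and px: "(T - t) * px ?u t x = U1 y"
    and wave: "(T - t)\<^sup>2 * (pt (pt ?u) t x - px (px ?u) t x) = (y\<^sup>2 - 1) * U2 y + 2 * y * U1 y"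
    using self_similar_partials_in_Gamma[OF U1 U2 T y] by blast
  have "pt (pt ?u) t x - px (px ?u) t x = (pt ?u t x)\<^sup>2 - (px ?u t x)\<^sup>2"
    using sol tx unfolding solves_B_def by fast
  then have "(y\<^sup>2 - 1) * U2 y + 2 * y * U1 y = ((T - t) * pt ?u t x)\<^sup>2 - ((T - t) * px ?u t x)\<^sup>2"
    unfolding wave[symmetric] by (simp add: power_mult_distrib right_diff_distrib)
  then show ?thesis
    unfolding pt px by (simp add: power_mult_distrib algebra_simps)
qed

lemma smooth_on_interval_derivatives:
  assumes "smooth_on_interval a b U"
  obtains U1 U2 where "\<And>y. a < y \<Longrightarrow> y < b \<Longrightarrow> (U has_real_derivative U1 y) (at y)"
    "\<And>y. a < y \<Longrightarrow> y < b \<Longrightarrow> (U1 has_real_derivative U2 y) (at y)"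
    "continuous_on {a..b} U"
proof -
  obtain D where D0: "\<forall>y\<in>{a..b}. D 0 y = U y"
    and D: "\<forall>k. \<forall>y\<in>{a..b}. (D k has_real_derivative D (Suc k) y) (at y within {a..b})"
    using assms unfolding smooth_on_interval_def by blast
  have D_at: "(D k has_real_derivative D (Suc k) y) (at y)" if "a < y" "y < b" for k y
  proof -
    have "(D k has_real_derivative D (Suc k) y) (at y within {a..b})"
      using D that by simp
    moreover have "at y within {a..b} = at y"
      using that by (intro at_within_interior) (simp add: interior_atLeastAtMost_real)
    ultimately show ?thesis by simp
  qed
  have "(U has_real_derivative D 1 y) (at y)" if "a < y" "y < b" for y
    using D_at[OF that, of 0] D0 that
    by (auto simp: has_field_derivative_def
        intro: has_derivative_transform_within_open[where s="{a<..<b}"])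
  moreover have "(D 1 has_real_derivative D 2 y) (at y)" if "a < y" "y < b" for y
    using D_at[OF that, of 1] by (simp add: numeral_2_eq_2)
  moreover have "continuous_on {a..b} U"
    using DERIV_continuous_on[of "{a..b}" "D 0" "D 1"] D D0
    by (auto intro: continuous_on_cong[THEN iffD1, rotated 2])
  ultimately show ?thesis
    using that by blast
qed

(* The ODE says that V = (y^2 - 1) U' solves the Riccati equation V' = - g V^2. *)
lemma profile_const_if_riccati:
  fixes U U1 U2 G g :: "real \<Rightarrow> real"
  assumes U1: "\<And>y. -1 < y \<Longrightarrow> y < 1 \<Longrightarrow> (U has_real_derivative U1 y) (at y)"
    and U2: "\<And>y. -1 < y \<Longrightarrow> y < 1 \<Longrightarrow> (U1 has_real_derivative U2 y) (at y)"
    and cont: "continuous_on {-1..1} U"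
    and G: "\<And>y. -1 < y \<Longrightarrow> y < 1 \<Longrightarrow> (G has_real_derivative g y) (at y)" "G ` {-1<..<1} = UNIV"
    and ode: "\<And>y. -1 < y \<Longrightarrow> y < 1 \<Longrightarrow>
      (y\<^sup>2 - 1) * U2 y + 2 * y * U1 y = - ((y\<^sup>2 - 1) * U1 y)\<^sup>2 * g y"
    and y: "y \<in> {-1..1}"
  shows "U y = U (-1)"
proof -
  let ?V = "\<lambda>y. (y\<^sup>2 - 1) * U1 y"
  have "?V y = 0" if "-1 < y" "y < 1" for y
  proof (rule riccati_vanishes[where I="{-1<..<1}" and V="?V" and G=G and g=g])
    fix z :: real assume z: "z \<in> {-1<..<1}"
    have "(?V has_real_derivative 2 * z * U1 z + (z\<^sup>2 - 1) * U2 z) (at z)"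
      using z by (auto intro!: derivative_eq_intros U2)
    moreover have "2 * z * U1 z + (z\<^sup>2 - 1) * U2 z = - (?V z)\<^sup>2 * g z"
      using ode[of z] z by (simp only: add.commute greaterThanLessThan_iff)
    ultimately show "(?V has_real_derivative - (?V z)\<^sup>2 * g z) (at z)"
      by simp
  qed (use G that in auto)
  moreover have "y\<^sup>2 - 1 \<noteq> 0" if "-1 < y" "y < 1" for y :: real
    using that abs_square_less_1[of y] by (simp add: abs_less_iff)
  ultimately have "U1 y = 0" if "-1 < y" "y < 1" for y
    using that by simp
  then show ?thesis
    using DERIV_isconst2[of "-1" 1 U y] cont y U1 by force
qed

lemma self_similar_solution_A_const:
  assumes T: "0 < T" and U: "smooth_on_interval (-1) 1 U"
    and sol: "solves_A (interior (Gamma T x0)) (\<lambda>t x. U ((x - x0) / (T - t)))"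
    and y: "y \<in> {-1..1}"
  shows "U y = U (-1)"
proof -
  obtain U1 U2 where U1: "\<And>y. -1 < y \<Longrightarrow> y < 1 \<Longrightarrow> (U has_real_derivative U1 y) (at y)"
    and U2: "\<And>y. -1 < y \<Longrightarrow> y < 1 \<Longrightarrow> (U1 has_real_derivative U2 y) (at y)"
    and "continuous_on {-1..1} U"
    using smooth_on_interval_derivatives[OF U] by blast
  then show ?thesis
  proof (rule profile_const_if_riccati[OF _ _ _ riccati_primitive_A_has_real_derivative riccati_primitive_A_surj _ y])
    fix y :: real assume y: "-1 < y" "y < 1"
    have "1 - y\<^sup>2 \<noteq> 0"
      using y by (simp add: abs_square_eq_1)
    moreover have "((y\<^sup>2 - 1) * U1 y)\<^sup>2 = (1 - y\<^sup>2)\<^sup>2 * (U1 y)\<^sup>2"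
      by (simp add: power_mult_distrib power2_commute)
    ultimately have "- ((y\<^sup>2 - 1) * U1 y)\<^sup>2 * (- y\<^sup>2 / (1 - y\<^sup>2)\<^sup>2) = y\<^sup>2 * (U1 y)\<^sup>2"
      by simp
    then show "(y\<^sup>2 - 1) * U2 y + 2 * y * U1 y = - ((y\<^sup>2 - 1) * U1 y)\<^sup>2 * (- y\<^sup>2 / (1 - y\<^sup>2)\<^sup>2)"
      using self_similar_solution_A_profile_ode[OF U1 U2 T sol y] by simp
  qed
qed

lemma self_similar_solution_B_const:
  assumes T: "0 < T" and U: "smooth_on_interval (-1) 1 U"
    and sol: "solves_B (interior (Gamma T x0)) (\<lambda>t x. U ((x - x0) / (T - t)))"
    and y: "y \<in> {-1..1}"
  shows "U y = U (-1)"
proof -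
  obtain U1 U2 where U1: "\<And>y. -1 < y \<Longrightarrow> y < 1 \<Longrightarrow> (U has_real_derivative U1 y) (at y)"
    and U2: "\<And>y. -1 < y \<Longrightarrow> y < 1 \<Longrightarrow> (U1 has_real_derivative U2 y) (at y)"
    and "continuous_on {-1..1} U"
    using smooth_on_interval_derivatives[OF U] by blast
  then show ?thesis
  proof (rule profile_const_if_riccati[where G=artanh and g="\<lambda>y. 1 / (1 - y\<^sup>2)", OF _ _ _ _ artanh_surj _ y])
    fix y :: real assume y: "-1 < y" "y < 1"
    then show "(artanh has_real_derivative 1 / (1 - y\<^sup>2)) (at y)"
      by (intro artanh_real_has_field_derivative) auto
    have "w \<noteq> 0 \<Longrightarrow> - (w * u)\<^sup>2 * (1 / - w) = w * u\<^sup>2" for w u :: real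
      by (simp add: power2_eq_square)
    moreover have "y\<^sup>2 - 1 \<noteq> 0"
      using y by (simp add: abs_square_eq_1)
    ultimately have "- ((y\<^sup>2 - 1) * U1 y)\<^sup>2 * (1 / (1 - y\<^sup>2)) = (y\<^sup>2 - 1) * (U1 y)\<^sup>2"
      by (metis minus_diff_eq)
    then show "(y\<^sup>2 - 1) * U2 y + 2 * y * U1 y = - ((y\<^sup>2 - 1) * U1 y)\<^sup>2 * (1 / (1 - y\<^sup>2))"
      using self_similar_solution_B_profile_ode[OF U1 U2 T sol y] by simp
  qed
qed

lemma no_nonconstant_self_similar_solution:
  assumes "0 < T"
  shows "\<not> (\<exists>U. smooth_on_interval (-1) 1 U \<and> (\<exists>y1\<in>{-1..1}. \<exists>y2\<in>{-1..1}. U y1 \<noteq> U y2) \<and>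
             solves_A (interior (Gamma T x0)) (\<lambda>t x. U ((x - x0) / (T - t))))"
    "\<not> (\<exists>U. smooth_on_interval (-1) 1 U \<and> (\<exists>y1\<in>{-1..1}. \<exists>y2\<in>{-1..1}. U y1 \<noteq> U y2) \<and>
             solves_B (interior (Gamma T x0)) (\<lambda>t x. U ((x - x0) / (T - t))))"
proof -
  have "U y1 = U y2"
    if "smooth_on_interval (-1) 1 U" "y1 \<in> {-1..1}" "y2 \<in> {-1..1}"
      "solves_A (interior (Gamma T x0)) (\<lambda>t x. U ((x - x0) / (T - t))) \<or>
       solves_B (interior (Gamma T x0)) (\<lambda>t x. U ((x - x0) / (T - t)))"
    for U and y1 y2 :: real
    using that(4) self_similar_solution_A_const[OF assms that(1) _ that(2)]
      self_similar_solution_A_const[OF assms that(1) _ that(3)]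
      self_similar_solution_B_const[OF assms that(1) _ that(2)]
      self_similar_solution_B_const[OF assms that(1) _ that(3)] by auto
  then show "\<not> (\<exists>U. smooth_on_interval (-1) 1 U \<and> (\<exists>y1\<in>{-1..1}. \<exists>y2\<in>{-1..1}. U y1 \<noteq> U y2) \<and>
             solves_A (interior (Gamma T x0)) (\<lambda>t x. U ((x - x0) / (T - t))))"
    "\<not> (\<exists>U. smooth_on_interval (-1) 1 U \<and> (\<exists>y1\<in>{-1..1}. \<exists>y2\<in>{-1..1}. U y1 \<noteq> U y2) \<and>
             solves_B (interior (Gamma T x0)) (\<lambda>t x. U ((x - x0) / (T - t))))"
    by blast+
qed

theorem theorem1p1:
  shows
  "(\<forall>T x0. T > 0 \<longrightarrow>
      \<not> (\<exists>U. smooth_on_interval (-1) 1 U \<and> (\<exists>y1\<in>{-1..1}. \<exists>y2\<in>{-1..1}. U y1 \<noteq> U y2) \<and>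
             solves_A (interior (Gamma T x0)) (\<lambda>t x. U ((x - x0) / (T - t)))) \<and>
      \<not> (\<exists>U. smooth_on_interval (-1) 1 U \<and> (\<exists>y1\<in>{-1..1}. \<exists>y2\<in>{-1..1}. U y1 \<noteq> U y2) \<and>
             solves_B (interior (Gamma T x0)) (\<lambda>t x. U ((x - x0) / (T - t)))))
   \<and>
   (\<forall>(\<alpha>::real) \<kappa> T x0. 0 < \<alpha> \<and> \<alpha> \<le> 1 \<and> T > 0 \<longrightarrow>
      (\<forall>U\<in>{U_A0 \<alpha>, U_Ainf \<alpha>}.
         (\<forall>(t, x)\<in>Gamma T x0. 1 - t / T > 0 \<and>
              1 - sqrt (1 - \<alpha>) * ((x - x0) / (T - t)) > 0 \<and>
              1 + sqrt (1 - \<alpha>) * ((x - x0) / (T - t)) > 0) \<and>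
         (\<exists>N. open N \<and> Gamma T x0 \<subseteq> N \<and>
              smooth2_on N (gss \<alpha> U \<kappa> T x0) \<and> solves_A N (gss \<alpha> U \<kappa> T x0)) \<and>
         filterlim (\<lambda>t. gss \<alpha> U \<kappa> T x0 t x0) at_top (at_left T)))
   \<and>
   (\<forall>(\<alpha>::nat) (\<beta>::real) \<kappa> T x0. 1 \<le> \<alpha> \<and> 0 < \<beta> \<and> T > 0 \<longrightarrow>
      (\<forall>(t, x)\<in>Gamma T x0. 1 - t / T > 0 \<and>
           (1 + (x - x0) / (T - t)) ^ \<alpha> + \<beta> * (1 - (x - x0) / (T - t)) ^ \<alpha> > 0) \<and>
      (\<exists>N. open N \<and> Gamma T x0 \<subseteq> N \<and>
           smooth2_on N (gss (real \<alpha>) (U_B \<alpha> \<beta>) \<kappa> T x0) \<and>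
           solves_B N (gss (real \<alpha>) (U_B \<alpha> \<beta>) \<kappa> T x0)) \<and>
      filterlim (\<lambda>t. gss (real \<alpha>) (U_B \<alpha> \<beta>) \<kappa> T x0 t x0) at_top (at_left T))"
  apply (rule conjI[OF _ conjI])
  subgoal by (intro allI impI conjI no_nonconstant_self_similar_solution)
  subgoal by (intro allI impI ballI, elim conjE, rule log_blowup_solutions_A)
  subgoal by (intro allI impI, elim conjE, rule log_blowup_solutions_B)
  done

end
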